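(* Let $k\ge3$, $\omega=\lceil\ln\ln n\rceil$ and let $p=p(n)=O(1/n)$. Let $(\tilde G,\hat\sigma_1,\hat\sigma_2)$ be drawn from the binomial planted replica model $\tilde\pi_{n,p}$. (1) Let $\mathcal K(G)$ be the number of vertices $v$ of a graph $G$ such that $\partial^\omega(G,v)$ contains a cycle. Then $\tilde\pi_{n,p}[\mathcal K(\tilde G)>n^{2/3}]=o(n^{-1/2})$. (2) Let $\mathcal L$ be the event that there is a vertex $v$ such that $\partial^\omega(\tilde G,v)$ contains more than $n^{0.1}$ vertices. Then $\tilde\pi_{n,p}[\mathcal L]\leq\exp(-\Omega(\ln^2n))$.
   Context: For maps $\sigma,\tau:[n]\to[k]$, a pair $\{u,v\}$ is bichromatic under both if $\sigma(u)\ne\sigma(v)$ and $\tau(u)\ne\tau(v)$. The binomial planted replica model $\tilde\pi_{n,p}$ is the distribution of $(\tilde G,\hat\sigma_1,\hat\sigma_2)$ obtained by choosing $\hat\sigma_1,\hat\sigma_2:[n]\to[k]$ independently and uniformly, and then including each pair of vertices of $[n]$ that is bichromatic under both $\hat\sigma_1$ and $\hat\sigma_2$ as an edge independently with probability $p$. $\partial^\omega(G,v)$ is the subgraph of $G$ induced on vertices at distance at most $\omega$ from $v$. *)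

theory Defs
  imports "HOL-Probability.Probability" "HOL-Library.Landau_Symbols"
begin

text \<open>Vertex set [n] is rendered as {0..<n}; a graph on [n] is a set of
  2-element subsets of {0..<n} (its edge set).\<close>

definition colourings :: "nat \<Rightarrow> nat \<Rightarrow> (nat \<Rightarrow> nat) set" where
  "colourings n k = PiE {0..<n} (\<lambda>_. {0..<k})"

definition bichrom_pairs :: "nat \<Rightarrow> (nat \<Rightarrow> nat) \<Rightarrow> (nat \<Rightarrow> nat) \<Rightarrow> nat set set" where
  "bichrom_pairs n s1 s2 =
     {{u, v} | u v. u < n \<and> v < n \<and> s1 u \<noteq> s1 v \<and> s2 u \<noteq> s2 v}"

definition planted_replica ::
  "nat \<Rightarrow> nat \<Rightarrow> real \<Rightarrow> (nat set set \<times> (nat \<Rightarrow> nat) \<times> (nat \<Rightarrow> nat)) pmf" where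
  "planted_replica n k p =
     do {
       s1 \<leftarrow> pmf_of_set (colourings n k);
       s2 \<leftarrow> pmf_of_set (colourings n k);
       f \<leftarrow> Pi_pmf (bichrom_pairs n s1 s2) False (\<lambda>_. bernoulli_pmf p);
       return_pmf ({e \<in> bichrom_pairs n s1 s2. f e}, s1, s2)
     }"

fun within_dist :: "nat set set \<Rightarrow> nat \<Rightarrow> nat \<Rightarrow> nat \<Rightarrow> bool" where
  "within_dist G 0 v u = (u = v)"
| "within_dist G (Suc m) v u = (within_dist G m v u \<or> (\<exists>w. within_dist G m v w \<and> {w, u} \<in> G))"

definition ball_set :: "nat set set \<Rightarrow> nat \<Rightarrow> nat \<Rightarrow> nat set" where
  "ball_set G m v = {u. within_dist G m v u}"

definition nbhd_edges :: "nat set set \<Rightarrow> nat \<Rightarrow> nat \<Rightarrow> nat set set" where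
  "nbhd_edges G m v = {e \<in> G. e \<subseteq> ball_set G m v}"

definition has_cycle :: "nat set set \<Rightarrow> bool" where
  "has_cycle H \<longleftrightarrow> (\<exists>xs. length xs \<ge> 3 \<and> distinct xs \<and>
      (\<forall>i < length xs. {xs ! i, xs ! ((i + 1) mod length xs)} \<in> H))"

definition cyc_count :: "nat \<Rightarrow> nat \<Rightarrow> nat set set \<Rightarrow> nat" where
  "cyc_count n m G = card {v \<in> {0..<n}. has_cycle (nbhd_edges G m v)}"

definition omega :: "nat \<Rightarrow> nat" where
  "omega n = nat \<lceil>ln (ln (real n))\<rceil>"

end

(*
  Both parts are first-moment bounds: every pair of vertices is an edge with probability at most
  p = O(1/n), independently of the other pairs, so a fixed set of l edges is present with
  probability at most p^l.

  (1) If the depth-omega neighbourhood of v contains a cycle, then walking down from a vertex of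
  the cycle that is farthest from v yields a "lollipop" at v: a path starting at v with
  l <= 2 omega + 2 vertices whose last vertex is also adjacent to an earlier vertex of the path.
  There are at most l n^(l-1) lollipops with l vertices and each has l edges, so the expected
  number of such v is at most (2 omega + 2)^2 (np)^(2 omega + 2) = n^(o(1)), and Markov's
  inequality gives the bound n^(o(1) - 2/3).

  (2) A ball of radius omega in a graph of maximum degree below t has at most t^omega vertices.
  With t = floor(n^(0.1/omega)) a ball with more than n^0.1 vertices forces a vertex of degree
  at least t, which has probability at most n (n choose t) p^t <= n (e n p / t)^t; as t grows
  faster than any power of ln n, this is at most exp(-ln^2 n).
*)
theory Submission
  imports Defs "HOL-Real_Asymp.Real_Asymp"
begin

type_synonym replica = "nat set set \<times> (nat \<Rightarrow> nat) \<times> (nat \<Rightarrow> nat)"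

section \<open>Walks and graph distance\<close>

fun walk :: "nat set set \<Rightarrow> nat list \<Rightarrow> bool" where
  "walk G [] = True"
| "walk G [x] = True"
| "walk G (x # y # r) = ({x, y} \<in> G \<and> walk G (y # r))"

lemma walk_append:
  "xs \<noteq> [] \<Longrightarrow> ys \<noteq> [] \<Longrightarrow> walk G (xs @ ys) \<longleftrightarrow> walk G xs \<and> walk G ys \<and> {last xs, hd ys} \<in> G"
proof (induction xs rule: walk.induct)
  case (2 G x) then show ?case by (cases ys) auto
next
  case (3 G x y r) then show ?case by auto
qed auto

lemma walk_iff_nth:
  "walk G xs \<longleftrightarrow> (\<forall>i. Suc i < length xs \<longrightarrow> {xs ! i, xs ! Suc i} \<in> G)"
proof (induction G xs rule: walk.induct)
  case (3 G x y r)
  show ?case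
  proof
    assume "walk G (x # y # r)"
    then show "\<forall>i. Suc i < length (x # y # r) \<longrightarrow> {(x # y # r) ! i, (x # y # r) ! Suc i} \<in> G"
      using 3 by (auto simp: nth_Cons split: nat.splits)
  next
    assume h: "\<forall>i. Suc i < length (x # y # r) \<longrightarrow> {(x # y # r) ! i, (x # y # r) ! Suc i} \<in> G"
    have "{x,y} \<in> G" using h[rule_format, of 0] by simp
    moreover have "\<forall>i. Suc i < length (y # r) \<longrightarrow> {(y # r) ! i, (y # r) ! Suc i} \<in> G"
      using h by (metis Suc_less_eq length_Cons nth_Cons_Suc)
    ultimately show "walk G (x # y # r)" using 3 by simp
  qed
qed auto

lemma walk_iff_image_subset:
  "walk G ys \<longleftrightarrow> (\<lambda>i. {ys ! i, ys ! Suc i}) ` {..<length ys - 1} \<subseteq> G"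
  unfolding walk_iff_nth image_subset_iff by (metis Suc_eq_plus1 lessThan_iff less_diff_conv)

definition reachable :: "nat set set \<Rightarrow> nat \<Rightarrow> nat \<Rightarrow> bool" where
  "reachable G v u \<longleftrightarrow> (\<exists>m. within_dist G m v u)"

definition graph_dist :: "nat set set \<Rightarrow> nat \<Rightarrow> nat \<Rightarrow> nat" where
  "graph_dist G v u = (LEAST d. within_dist G d v u)"

lemma graph_dist_le: "within_dist G d v u \<Longrightarrow> graph_dist G v u \<le> d"
  unfolding graph_dist_def by (rule Least_le)

lemma within_dist_graph_dist: "reachable G v u \<Longrightarrow> within_dist G (graph_dist G v u) v u"
  unfolding graph_dist_def reachable_def by (metis LeastI)

lemma graph_dist_edge:
  "reachable G v u \<Longrightarrow> {u, w} \<in> G \<Longrightarrow> reachable G v w \<and> graph_dist G v w \<le> Suc (graph_dist G v u)"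
  by (metis within_dist.simps(2) within_dist_graph_dist graph_dist_le reachable_def)

lemma graph_dist_0: "reachable G v u \<Longrightarrow> graph_dist G v u = 0 \<Longrightarrow> u = v"
  using within_dist_graph_dist by fastforce

lemma graph_dist_Suc:
  assumes "reachable G v u" "graph_dist G v u = Suc j"
  obtains w where "{w, u} \<in> G" "reachable G v w" "graph_dist G v w = j"
proof -
  have "within_dist G (Suc j) v u" using within_dist_graph_dist assms by metis
  moreover have "\<not> within_dist G j v u" using graph_dist_le assms by fastforce
  ultimately obtain w where w: "within_dist G j v w" "{w, u} \<in> G" by auto
  have rw: "reachable G v w" using w reachable_def by blast
  have "graph_dist G v w \<le> j" using graph_dist_le w by blast
  moreover have "graph_dist G v u \<le> Suc (graph_dist G v w)"
    using graph_dist_edge rw w(2) by (metis insert_commute)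
  ultimately show ?thesis using that w rw assms by simp
qed

lemma shortest_path:
  "reachable G v u \<Longrightarrow> graph_dist G v u = j \<Longrightarrow>
   \<exists>P. length P = Suc j \<and> hd P = v \<and> last P = u \<and> walk G P \<and> distinct P
     \<and> (\<forall>y\<in>set P. graph_dist G v y \<le> j)"
proof (induction j arbitrary: u)
  case 0
  then have "u = v" using graph_dist_0 by blast
  then show ?case using \<open>graph_dist G v u = 0\<close> by (intro exI[of _ "[v]"]) auto
next
  case (Suc j)
  obtain w where w: "{w, u} \<in> G" "reachable G v w" "graph_dist G v w = j"
    using graph_dist_Suc Suc.prems by blast
  obtain P where P: "length P = Suc j" "hd P = v" "last P = w" "walk G P" "distinct P"
      "\<forall>y\<in>set P. graph_dist G v y \<le> j" using Suc.IH w by blast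
  have "u \<notin> set P" using P(6) Suc.prems by fastforce
  moreover have "P \<noteq> []" using P(1) by auto
  ultimately show ?case using P w Suc.prems
    by (intro exI[of _ "P @ [u]"]) (auto simp: walk_append)
qed

section \<open>Balls in graphs of bounded degree\<close>

lemma within_dist_in_vertex_set:
  "\<forall>e\<in>G. e \<subseteq> A \<Longrightarrow> within_dist G m v u \<Longrightarrow> u = v \<or> u \<in> A"
  by (induction m arbitrary: u) auto

lemma card_ball_set_le:
  assumes "finite A" "\<forall>e\<in>G. e \<subseteq> A" "\<forall>u. card {w\<in>A. {u, w} \<in> G} \<le> D"
  shows "card (ball_set G m v) \<le> (D + 1) ^ m"
proof (induction m)
  case 0
  have "ball_set G 0 v = {v}" unfolding ball_set_def by auto
  then show ?case by simp
next
  case (Suc m)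
  let ?B = "ball_set G m v"
  let ?N = "\<Union>u\<in>?B. {w\<in>A. {u, w} \<in> G}"
  have fin: "finite ?B"
    by (rule finite_subset[of _ "insert v A"])
      (use within_dist_in_vertex_set[OF assms(2)] assms(1) in \<open>auto simp: ball_set_def\<close>)
  have "ball_set G (Suc m) v \<subseteq> ?B \<union> ?N"
    using assms(2) by (auto simp: ball_set_def)
  then have "card (ball_set G (Suc m) v) \<le> card (?B \<union> ?N)"
    by (rule card_mono[rotated]) (use fin assms(1) in auto)
  also have "\<dots> \<le> card ?B + card ?N" by (rule card_Un_le)
  also have "card ?N \<le> (\<Sum>u\<in>?B. card {w\<in>A. {u, w} \<in> G})" by (rule card_UN_le[OF fin])
  also have "\<dots> \<le> (\<Sum>u\<in>?B. D)" using assms(3) by (intro sum_mono) blast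
  also have "card ?B + (\<Sum>u\<in>?B. D) = (D + 1) * card ?B" by simp
  also have "\<dots> \<le> (D + 1) * (D + 1) ^ m" using Suc.IH by (rule mult_left_mono) simp
  finally show ?case by simp
qed

lemma large_ball_imp_star:
  assumes "\<forall>e\<in>G. e \<subseteq> {0..<n}" "1 \<le> t" "t ^ m < card (ball_set G m v)"
  obtains u T where "u < n" "T \<subseteq> {0..<n}" "card T = t" "(\<lambda>w. {u, w}) ` T \<subseteq> G"
proof -
  have "\<not> (\<forall>u. card {w\<in>{0..<n}. {u, w} \<in> G} \<le> t - 1)"
    using card_ball_set_le[OF _ assms(1), of "t - 1" m v] assms(2,3) by auto
  then obtain u where "\<not> card {w\<in>{0..<n}. {u, w} \<in> G} \<le> t - 1" by blast
  then have u: "t \<le> card {w\<in>{0..<n}. {u, w} \<in> G}" using assms(2) by linarith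
  obtain T where T: "T \<subseteq> {w\<in>{0..<n}. {u, w} \<in> G}" "card T = t"
    using obtain_subset_with_card_n[OF u] by metis
  obtain w where "w \<in> T" using T(2) assms(2) by fastforce
  then have "u < n" using T(1) assms(1) by fastforce
  with T show ?thesis using that by blast
qed

section \<open>Lollipops\<close>

text \<open>A lollipop at \<open>v\<close> is a path \<open>ys\<close> from \<open>v\<close> together with an edge from its last vertex back
  to \<open>ys ! s\<close>; as \<open>s + 3 \<le> length ys\<close>, that edge is not on the path, so a lollipop has exactly
  \<open>length ys\<close> edges.\<close>

definition lollipop :: "nat set set \<Rightarrow> nat \<Rightarrow> nat list \<Rightarrow> nat \<Rightarrow> bool" where
  "lollipop G v ys s \<longleftrightarrow> distinct ys \<and> ys \<noteq> [] \<and> hd ys = v \<and> walk G ys \<and> s + 3 \<le> length ys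
     \<and> {last ys, ys ! s} \<in> G"

definition lollipop_edges :: "nat list \<Rightarrow> nat \<Rightarrow> nat set set" where
  "lollipop_edges ys s = (\<lambda>i. {ys ! i, ys ! Suc i}) ` {..<length ys - 1} \<union> {{last ys, ys ! s}}"

lemma lollipop_iff_edges:
  "lollipop G v ys s \<longleftrightarrow>
     (distinct ys \<and> ys \<noteq> [] \<and> hd ys = v \<and> s + 3 \<le> length ys) \<and> lollipop_edges ys s \<subseteq> G"
proof -
  have "lollipop_edges ys s \<subseteq> G \<longleftrightarrow> walk G ys \<and> {last ys, ys ! s} \<in> G"
    unfolding lollipop_edges_def walk_iff_image_subset Un_subset_iff by simp
  then show ?thesis unfolding lollipop_def by argo
qed

lemma card_lollipop_edges:
  assumes "distinct ys" "s + 3 \<le> length ys"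
  shows "card (lollipop_edges ys s) = length ys"
proof -
  define L where "L = length ys"
  have inj: "inj_on (\<lambda>i. {ys ! i, ys ! Suc i}) {..<L - 1}"
  proof (rule inj_onI)
    fix i j assume ij: "i \<in> {..<L - 1}" "j \<in> {..<L - 1}" "{ys ! i, ys ! Suc i} = {ys ! j, ys ! Suc j}"
    then show "i = j" using assms(1) unfolding L_def
      by (auto simp: doubleton_eq_iff nth_eq_iff_index_eq)
  qed
  have lastn: "last ys = ys ! (L - 1)" using assms(2) unfolding L_def by (subst last_conv_nth) auto
  have "{last ys, ys ! s} \<notin> (\<lambda>i. {ys ! i, ys ! Suc i}) ` {..<L - 1}"
    using assms unfolding lastn L_def by (auto simp: doubleton_eq_iff nth_eq_iff_index_eq)
  then have "card (lollipop_edges ys s) = card ((\<lambda>i. {ys ! i, ys ! Suc i}) ` {..<L - 1}) + 1"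
    unfolding lollipop_edges_def L_def[symmetric] by simp
  also have "\<dots> = L" using card_image[OF inj] assms(2) unfolding L_def by simp
  finally show ?thesis unfolding L_def .
qed

lemma set_subset_Union_lollipop_edges:
  assumes "2 \<le> length ys"
  shows "set ys \<subseteq> \<Union> (lollipop_edges ys s)"
proof
  fix y assume "y \<in> set ys"
  then obtain i where i: "i < length ys" "y = ys ! i" by (auto simp: in_set_conv_nth)
  define j where "j = (if i < length ys - 1 then i else i - 1)"
  have "j < length ys - 1" "y \<in> {ys ! j, ys ! Suc j}"
    using i assms unfolding j_def by auto
  then show "y \<in> \<Union> (lollipop_edges ys s)" unfolding lollipop_edges_def by blast
qed

text \<open>Extend \<open>W\<close> at both ends by predecessors on shortest paths from \<open>v\<close>; once the two
  predecessors coincide, a shortest path to that vertex followed by \<open>W\<close> is a lollipop.\<close>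

lemma lollipop_of_level_path:
  "distinct W \<Longrightarrow> 2 \<le> length W \<Longrightarrow> walk G W \<Longrightarrow> reachable G v (hd W) \<Longrightarrow> reachable G v (last W)
   \<Longrightarrow> graph_dist G v (hd W) = j \<Longrightarrow> graph_dist G v (last W) = j
   \<Longrightarrow> \<forall>y\<in>set W. j \<le> graph_dist G v y
   \<Longrightarrow> \<exists>ys s. lollipop G v ys s \<and> length ys \<le> 2 * j + length W"
proof (induction j arbitrary: W)
  case 0
  then have "hd W = last W" using graph_dist_0 by metis
  then show ?case using 0 by (cases W) (auto split: if_splits dest: last_in_set)
next
  case (Suc j)
  have Wne: "W \<noteq> []" using Suc.prems by auto
  obtain a where a: "{a, hd W} \<in> G" "reachable G v a" "graph_dist G v a = j"
    using graph_dist_Suc Suc.prems by metis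
  obtain b where b: "{b, last W} \<in> G" "reachable G v b" "graph_dist G v b = j"
    using graph_dist_Suc Suc.prems by metis
  show ?case
  proof (cases "a = b")
    case True
    obtain P where P: "length P = Suc j" "hd P = v" "last P = a" "walk G P" "distinct P"
      "\<forall>y\<in>set P. graph_dist G v y \<le> j" using shortest_path a by blast
    have Pne: "P \<noteq> []" using P(1) by auto
    have "set P \<inter> set W = {}" using P(6) Suc.prems(8) by fastforce
    moreover have "(P @ W) ! j = a" using P(1,3) Pne by (simp add: nth_append last_conv_nth)
    ultimately have "lollipop G v (P @ W) j"
      unfolding lollipop_def using P Pne Wne Suc.prems(1,2,3) a b True
      by (auto simp: walk_append insert_commute)
    then show ?thesis using P(1) by auto
  next
    case False
    define W' where "W' = a # W @ [b]"
    have "a \<notin> set W" "b \<notin> set W" using a(3) b(3) Suc.prems(8) by fastforce+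
    then have dW': "distinct W'" using False Suc.prems(1) W'_def by auto
    have "walk G (W @ [b])" using Wne Suc.prems(3) b by (simp add: walk_append insert_commute)
    then have wW': "walk G W'" using Wne a unfolding W'_def by (cases W) (auto simp: insert_commute)
    from dW' wW' have "\<exists>ys s. lollipop G v ys s \<and> length ys \<le> 2 * j + length W'"
      by (intro Suc.IH) (use W'_def a b Suc.prems(8) in auto)
    then show ?thesis using W'_def by auto
  qed
qed

lemma has_cycle_nbhd_edges_peak:
  assumes "has_cycle (nbhd_edges G m v)"
  obtains x a b where "distinct [a, x, b]" "{x, a} \<in> G" "{b, x} \<in> G"
    "reachable G v a" "reachable G v b" "reachable G v x" "graph_dist G v x \<le> m"
    "graph_dist G v a \<le> graph_dist G v x" "graph_dist G v b \<le> graph_dist G v x"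
proof -
  obtain xs where xs: "length xs \<ge> 3" "distinct xs"
    "\<forall>i < length xs. {xs ! i, xs ! ((i + 1) mod length xs)} \<in> nbhd_edges G m v"
    using assms unfolding has_cycle_def by blast
  define L where "L = length xs"
  have E: "{xs ! i, xs ! ((i + 1) mod L)} \<in> G" if "i < L" for i
    using xs(3) that unfolding L_def nbhd_edges_def by blast
  have W: "within_dist G m v (xs ! i)" if "i < L" for i
    using xs(3) that unfolding L_def nbhd_edges_def ball_set_def by blast
  have L3: "3 \<le> L" using xs(1) unfolding L_def .
  have R: "reachable G v (xs ! i)" "graph_dist G v (xs ! i) \<le> m" if "i < L" for i
    using W[OF that] graph_dist_le unfolding reachable_def by blast+
  have "\<forall>i. i < L \<longrightarrow> graph_dist G v (xs ! i) < Suc m" using R(2) by (simp add: le_imp_less_Suc)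
  then obtain i0 where i0: "i0 < L" "\<forall>i<L. graph_dist G v (xs ! i) \<le> graph_dist G v (xs ! i0)"
    using ex_has_greatest_nat[of "\<lambda>i. i < L" 0 "\<lambda>i. graph_dist G v (xs ! i)" "Suc m"] L3
    by auto
  define i1 where "i1 = (if i0 = L - 1 then 0 else i0 + 1)"
  define i2 where "i2 = (if i0 = 0 then L - 1 else i0 - 1)"
  have i12: "i1 < L" "i2 < L" "i1 \<noteq> i0" "i2 \<noteq> i0" "i1 \<noteq> i2"
    using i0(1) L3 unfolding i1_def i2_def by auto
  have succ: "(i0 + 1) mod L = i1" "(i2 + 1) mod L = i0"
    using i0(1) L3 unfolding i1_def i2_def by (auto simp: mod_if)
  show ?thesis
  proof (rule that[where x = "xs ! i0" and a = "xs ! i1" and b = "xs ! i2"])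
    show "distinct [xs ! i1, xs ! i0, xs ! i2]"
      using i12 i0(1) xs(2) unfolding L_def by (auto simp: nth_eq_iff_index_eq)
    show "{xs ! i0, xs ! i1} \<in> G" using E[OF i0(1)] unfolding succ(1) .
    show "{xs ! i2, xs ! i0} \<in> G" using E[OF i12(2)] unfolding succ(2) .
  qed (use R i0 i12 in auto)
qed

lemma has_cycle_nbhd_edges_imp_lollipop:
  assumes "has_cycle (nbhd_edges G m v)"
  shows "\<exists>ys s. lollipop G v ys s \<and> length ys \<le> 2 * m + 2"
proof -
  obtain x a b where dst: "distinct [a, x, b]" and E: "{x, a} \<in> G" "{b, x} \<in> G"
    and R: "reachable G v a" "reachable G v b" "reachable G v x" and xm: "graph_dist G v x \<le> m"
    and le: "graph_dist G v a \<le> graph_dist G v x" "graph_dist G v b \<le> graph_dist G v x"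
    using has_cycle_nbhd_edges_peak[OF assms] by metis
  have ge: "graph_dist G v x \<le> Suc (graph_dist G v a)" "graph_dist G v x \<le> Suc (graph_dist G v b)"
    using graph_dist_edge[OF R(1), of x] graph_dist_edge[OF R(2), of x] E
    by (auto simp: insert_commute)
  consider "graph_dist G v a = graph_dist G v x" | "graph_dist G v b = graph_dist G v x"
    | "graph_dist G v x = Suc (graph_dist G v a)" "graph_dist G v x = Suc (graph_dist G v b)"
    using le ge by linarith
  then show ?thesis
  proof cases
    case 1
    have "\<exists>ys s. lollipop G v ys s \<and> length ys \<le> 2 * graph_dist G v x + length [x, a]"
      by (rule lollipop_of_level_path) (use 1 dst E R in auto)
    then show ?thesis using xm by fastforce
  next
    case 2
    have "\<exists>ys s. lollipop G v ys s \<and> length ys \<le> 2 * graph_dist G v x + length [b, x]"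
      by (rule lollipop_of_level_path) (use 2 dst E R in auto)
    then show ?thesis using xm by fastforce
  next
    case 3
    have "\<exists>ys s. lollipop G v ys s \<and> length ys \<le> 2 * graph_dist G v a + length [a, x, b]"
      by (rule lollipop_of_level_path) (use 3 dst E R in \<open>auto simp: insert_commute\<close>)
    then show ?thesis using xm 3 by fastforce
  qed
qed

text \<open>A lollipop at \<open>v\<close> with \<open>l\<close> vertices in \<open>{0..<n}\<close> is encoded by its closing index \<open>s\<close>
  and the list of its vertices after \<open>v\<close>.\<close>

definition lollipop_codes :: "nat \<Rightarrow> nat \<Rightarrow> nat \<Rightarrow> (nat \<times> nat list) set" where
  "lollipop_codes n v l =
     {s. s + 3 \<le> l} \<times> {zs. set zs \<subseteq> {0..<n} \<and> length zs = l - 1 \<and> distinct (v # zs)}"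

lemma finite_lollipop_codes: "finite (lollipop_codes n v l)"
proof -
  have "finite {s::nat. s + 3 \<le> l}" by (rule finite_subset[of _ "{..l}"]) auto
  moreover have "finite {zs. set zs \<subseteq> {0..<n} \<and> length zs = l - 1 \<and> distinct (v # zs)}"
    by (rule finite_subset[OF _ finite_lists_length_eq[of "{0..<n}" "l - 1"]]) auto
  ultimately show ?thesis unfolding lollipop_codes_def by blast
qed

lemma card_lollipop_codes_le: "card (lollipop_codes n v l) \<le> l * n ^ (l - 1)"
proof -
  have "card {s::nat. s + 3 \<le> l} \<le> card {..<l}" by (rule card_mono) auto
  moreover have "card {zs. set zs \<subseteq> {0..<n} \<and> length zs = l - 1 \<and> distinct (v # zs)}
      \<le> card {zs. set zs \<subseteq> {0..<n} \<and> length zs = l - 1}"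
    by (rule card_mono[OF finite_lists_length_eq]) auto
  ultimately show ?thesis
    unfolding lollipop_codes_def card_cartesian_product
    by (intro mult_le_mono) (auto simp: card_lists_length_eq)
qed

lemma has_cycle_nbhd_edges_imp_lollipop_code:
  assumes "\<forall>e\<in>G. e \<subseteq> {0..<n}" "has_cycle (nbhd_edges G m v)"
  obtains l s zs where "l \<in> {3..2*m+2}" "(s, zs) \<in> lollipop_codes n v l"
    "lollipop_edges (v # zs) s \<subseteq> G"
proof -
  obtain ys s where ys: "lollipop G v ys s" "length ys \<le> 2 * m + 2"
    using has_cycle_nbhd_edges_imp_lollipop[OF assms(2)] by blast
  then have L: "distinct ys" "ys \<noteq> []" "hd ys = v" "s + 3 \<le> length ys" "lollipop_edges ys s \<subseteq> G"
    unfolding lollipop_iff_edges by simp_all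
  define zs where "zs = tl ys"
  have ysz: "ys = v # zs" using L(2,3) zs_def by (cases ys) auto
  have "set ys \<subseteq> \<Union> (lollipop_edges ys s)"
    using L(4) by (intro set_subset_Union_lollipop_edges) simp
  also have "\<dots> \<subseteq> {0..<n}" using L(5) assms(1) by blast
  finally have "(s, zs) \<in> lollipop_codes n v (length ys)"
    using L(1,4) ysz unfolding lollipop_codes_def by auto
  moreover have "length ys \<in> {3..2*m+2}" using L(4) ys(2) by auto
  ultimately show ?thesis using that L(5) ysz by blast
qed

section \<open>Edge probabilities in the planted replica model\<close>

lemma finite_bichrom_pairs: "finite (bichrom_pairs n s1 s2)"
proof -
  have "bichrom_pairs n s1 s2 \<subseteq> (\<lambda>(u, v). {u, v}) ` ({0..<n} \<times> {0..<n})"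
    unfolding bichrom_pairs_def by auto
  then show ?thesis by (rule finite_subset) auto
qed

lemma prob_bind_pmf_le:
  assumes "\<And>x. x \<in> set_pmf M \<Longrightarrow> measure_pmf.prob (F x) A \<le> c" "0 \<le> c"
  shows "measure_pmf.prob (bind_pmf M F) A \<le> c"
proof -
  have "ennreal (measure_pmf.prob (bind_pmf M F) A) = (\<integral>\<^sup>+x. ennreal (measure_pmf.prob (F x) A) \<partial>M)"
    by (simp add: measure_pmf.emeasure_eq_measure[symmetric])
  also have "\<dots> \<le> (\<integral>\<^sup>+x. ennreal c \<partial>M)"
    by (intro nn_integral_mono_AE) (auto simp: AE_measure_pmf_iff assms)
  also have "\<dots> = ennreal c" by simp
  finally show ?thesis using assms(2) by simp
qed

lemma prob_Pi_pmf_bernoulli_subset_le: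
  assumes "0 \<le> q" "q \<le> 1" "finite B"
  shows "measure_pmf.prob (Pi_pmf B False (\<lambda>_. bernoulli_pmf q)) {f. S \<subseteq> {e \<in> B. f e}}
         \<le> q ^ card S"
proof (cases "S \<subseteq> B")
  case True
  have "{f. S \<subseteq> {e \<in> B. f e}} = Pi B (\<lambda>e. if e \<in> S then {True} else UNIV)"
    using True unfolding Pi_def by auto
  then have "measure_pmf.prob (Pi_pmf B False (\<lambda>_. bernoulli_pmf q)) {f. S \<subseteq> {e \<in> B. f e}}
      = (\<Prod>e\<in>B. measure_pmf.prob (bernoulli_pmf q) (if e \<in> S then {True} else UNIV))"
    using measure_Pi_pmf_Pi[OF assms(3)] by simp
  also have "\<dots> = (\<Prod>e\<in>B. if e \<in> S then q else 1)"
    using assms(1,2) by (intro prod.cong) (auto simp: measure_pmf_single)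
  also have "\<dots> = q ^ card S"
    using assms(3) True by (simp add: prod.If_cases Int_absorb1)
  finally show ?thesis by simp
next
  case False
  then have "{f. S \<subseteq> {e \<in> B. f e}} = {}" by auto
  then show ?thesis using assms by simp
qed

lemma prob_planted_replica_contains:
  assumes "0 \<le> q" "q \<le> 1"
  shows "measure_pmf.prob (planted_replica n k q) {x. S \<subseteq> fst x} \<le> q ^ card S"
proof -
  have inner: "measure_pmf.prob (Pi_pmf (bichrom_pairs n s1 s2) False (\<lambda>_. bernoulli_pmf q) \<bind>
       (\<lambda>f. return_pmf ({e \<in> bichrom_pairs n s1 s2. f e}, s1, s2))) {x. S \<subseteq> fst x} \<le> q ^ card S"
    for s1 s2
  proof -
    let ?B = "bichrom_pairs n s1 s2"
    have "measure_pmf.prob (Pi_pmf ?B False (\<lambda>_. bernoulli_pmf q) \<bind>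
             (\<lambda>f. return_pmf ({e \<in> ?B. f e}, s1, s2))) {x. S \<subseteq> fst x}
          = measure_pmf.prob (Pi_pmf ?B False (\<lambda>_. bernoulli_pmf q)) {f. S \<subseteq> {e \<in> ?B. f e}}"
      by (simp add: map_pmf_def[symmetric] vimage_def)
    also have "\<dots> \<le> q ^ card S" by (rule prob_Pi_pmf_bernoulli_subset_le[OF assms finite_bichrom_pairs])
    finally show ?thesis .
  qed
  show ?thesis
    unfolding planted_replica_def
    by (rule prob_bind_pmf_le, rule prob_bind_pmf_le, rule inner) (use assms(1) in simp_all)
qed

lemma prob_planted_replica_mono:
  assumes "\<And>x. \<forall>e\<in>fst x. e \<subseteq> {0..<n} \<Longrightarrow> x \<in> E \<Longrightarrow> x \<in> F"
  shows "measure_pmf.prob (planted_replica n k q) E \<le> measure_pmf.prob (planted_replica n k q) F"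
proof (rule measure_pmf.finite_measure_mono_AE)
  have "\<forall>e\<in>fst x. e \<subseteq> {0..<n}" if "x \<in> set_pmf (planted_replica n k q)" for x
    using that unfolding planted_replica_def bichrom_pairs_def by auto
  then show "AE x in measure_pmf (planted_replica n k q). x \<in> E \<longrightarrow> x \<in> F"
    using assms by (auto simp: AE_measure_pmf_iff)
qed simp

lemma prob_UN_UN_le:
  fixes M :: "'a pmf"
  assumes "finite I" "\<And>i. i \<in> I \<Longrightarrow> finite (J i)"
  shows "measure_pmf.prob M (\<Union>i\<in>I. \<Union>j\<in>J i. A i j) \<le> (\<Sum>i\<in>I. \<Sum>j\<in>J i. measure_pmf.prob M (A i j))"
proof -
  have "measure_pmf.prob M (\<Union>i\<in>I. \<Union>j\<in>J i. A i j) \<le> (\<Sum>i\<in>I. measure_pmf.prob M (\<Union>j\<in>J i. A i j))"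
    by (rule measure_pmf.finite_measure_subadditive_finite) (use assms in auto)
  also have "\<dots> \<le> (\<Sum>i\<in>I. \<Sum>j\<in>J i. measure_pmf.prob M (A i j))"
    by (intro sum_mono measure_pmf.finite_measure_subadditive_finite assms) auto
  finally show ?thesis .
qed

section \<open>First-moment bounds\<close>

lemma prob_large_ball_le:
  assumes q: "0 \<le> q" "q \<le> 1" and t: "1 \<le> t" "real t ^ m \<le> N"
  shows "measure_pmf.prob (planted_replica n k q)
           {x. \<exists>v \<in> {0..<n}. real (card (ball_set (fst x) m v)) > N}
         \<le> real n * real (n choose t) * q ^ t"
proof -
  let ?M = "planted_replica n k q"
  define Ts where "Ts = {T. T \<subseteq> {0..<n} \<and> card T = t}"
  define F where "F u T = {x :: replica. (\<lambda>w. {u, w}) ` T \<subseteq> fst x}" for u :: nat and T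
  have finTs: "finite Ts" unfolding Ts_def by (rule finite_subset[of _ "Pow {0..<n}"]) auto
  have "measure_pmf.prob ?M {x. \<exists>v \<in> {0..<n}. real (card (ball_set (fst x) m v)) > N}
        \<le> measure_pmf.prob ?M (\<Union>u\<in>{0..<n}. \<Union>T\<in>Ts. F u T)"
  proof (rule prob_planted_replica_mono)
    fix x :: replica assume sub: "\<forall>e\<in>fst x. e \<subseteq> {0..<n}"
      and "x \<in> {x. \<exists>v \<in> {0..<n}. real (card (ball_set (fst x) m v)) > N}"
    then obtain v where "N < real (card (ball_set (fst x) m v))" by blast
    with t(2) have "t ^ m < card (ball_set (fst x) m v)"
      by (metis le_less_trans of_nat_less_iff of_nat_power)
    then obtain u T where "u < n" "T \<subseteq> {0..<n}" "card T = t" "(\<lambda>w. {u, w}) ` T \<subseteq> fst x"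
      using large_ball_imp_star[OF sub t(1)] by blast
    then have "u \<in> {0..<n}" "T \<in> Ts" "x \<in> F u T" unfolding Ts_def F_def by auto
    then show "x \<in> (\<Union>u\<in>{0..<n}. \<Union>T\<in>Ts. F u T)" by blast
  qed
  also have "\<dots> \<le> (\<Sum>u\<in>{0..<n}. \<Sum>T\<in>Ts. measure_pmf.prob ?M (F u T))"
    by (rule prob_UN_UN_le) (use finTs in auto)
  also have "\<dots> \<le> (\<Sum>u\<in>{0..<n}. \<Sum>T\<in>Ts. q ^ t)"
  proof (intro sum_mono)
    fix u T assume "T \<in> Ts"
    then have "card ((\<lambda>w. {u, w}) ` T) = t" unfolding Ts_def
      by (subst card_image) (auto simp: inj_on_def doubleton_eq_iff)
    then show "measure_pmf.prob ?M (F u T) \<le> q ^ t"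
      using prob_planted_replica_contains[OF q, where S = "(\<lambda>w. {u, w}) ` T"] unfolding F_def by simp
  qed
  also have "\<dots> = real n * real (card Ts) * q ^ t" by simp
  also have "card Ts = n choose t" unfolding Ts_def using n_subsets[of "{0..<n}" t] by simp
  finally show ?thesis .
qed

lemma prob_cycle_near_vertex_le:
  assumes q: "0 \<le> q" "q \<le> 1"
  shows "measure_pmf.prob (planted_replica n k q) {x. has_cycle (nbhd_edges (fst x) m v)}
         \<le> (\<Sum>l\<in>{3..2*m+2}. real l * real n ^ (l - 1) * q ^ l)"
proof -
  let ?M = "planted_replica n k q"
  define A where "A c = {x :: replica. lollipop_edges (v # snd c) (fst c) \<subseteq> fst x}" for c :: "nat \<times> nat list"
  have "measure_pmf.prob ?M {x. has_cycle (nbhd_edges (fst x) m v)}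
        \<le> measure_pmf.prob ?M (\<Union>l\<in>{3..2*m+2}. \<Union>c\<in>lollipop_codes n v l. A c)"
  proof (rule prob_planted_replica_mono)
    fix x :: replica assume "\<forall>e\<in>fst x. e \<subseteq> {0..<n}" "x \<in> {x. has_cycle (nbhd_edges (fst x) m v)}"
    then obtain l s zs where "l \<in> {3..2*m+2}" "(s, zs) \<in> lollipop_codes n v l"
      "lollipop_edges (v # zs) s \<subseteq> fst x"
      using has_cycle_nbhd_edges_imp_lollipop_code by blast
    then show "x \<in> (\<Union>l\<in>{3..2*m+2}. \<Union>c\<in>lollipop_codes n v l. A c)"
      unfolding A_def by force
  qed
  also have "\<dots> \<le> (\<Sum>l\<in>{3..2*m+2}. \<Sum>c\<in>lollipop_codes n v l. measure_pmf.prob ?M (A c))"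
    by (rule prob_UN_UN_le) (auto simp: finite_lollipop_codes)
  also have "\<dots> \<le> (\<Sum>l\<in>{3..2*m+2}. \<Sum>c\<in>lollipop_codes n v l. q ^ l)"
  proof (intro sum_mono)
    fix l c assume "c \<in> lollipop_codes n v l"
    then obtain s zs where c: "c = (s, zs)" "distinct (v # zs)" "s + 3 \<le> length (v # zs)"
      "length (v # zs) = l"
      unfolding lollipop_codes_def by auto
    have "card (lollipop_edges (v # zs) s) = l" using card_lollipop_edges[OF c(2,3)] c(4) by simp
    then show "measure_pmf.prob ?M (A c) \<le> q ^ l"
      using prob_planted_replica_contains[OF q, where S = "lollipop_edges (v # zs) s"]
      unfolding A_def c(1) by simp
  qed
  also have "\<dots> \<le> (\<Sum>l\<in>{3..2*m+2}. real l * real n ^ (l - 1) * q ^ l)"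
  proof (intro sum_mono)
    fix l
    have "real (card (lollipop_codes n v l)) \<le> real l * real n ^ (l - 1)"
      by (metis card_lollipop_codes_le of_nat_le_iff of_nat_mult of_nat_power)
    then show "(\<Sum>c\<in>lollipop_codes n v l. q ^ l) \<le> real l * real n ^ (l - 1) * q ^ l"
      using q by (simp add: mult_right_mono)
  qed
  finally show ?thesis .
qed

lemma prob_cyc_count_gt_le:
  assumes q: "0 \<le> q" "q \<le> 1" and N: "0 < N"
  shows "measure_pmf.prob (planted_replica n k q) {x. real (cyc_count n m (fst x)) > N}
         \<le> real n * (\<Sum>l\<in>{3..2*m+2}. real l * real n ^ (l - 1) * q ^ l) / N"
proof -
  let ?M = "planted_replica n k q"
  define C where "C v = {x :: replica. has_cycle (nbhd_edges (fst x) m v)}" for v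
  define u where "u x = (\<Sum>v\<in>{0..<n}. indicator (C v) x :: real)" for x
  have ueq: "real (cyc_count n m (fst x)) = u x" for x
  proof -
    have "{v \<in> {0..<n}. has_cycle (nbhd_edges (fst x) m v)} = {0..<n} \<inter> {v. x \<in> C v}"
      unfolding C_def by auto
    then show ?thesis
      unfolding cyc_count_def u_def by (simp add: indicator_def sum.If_cases)
  qed
  have intI: "integrable (measure_pmf ?M) (indicator B :: _ \<Rightarrow> real)" for B
    by (rule measure_pmf.integrable_const_bound[where B=1]) (auto simp: indicator_def)
  have "measure_pmf.prob ?M {x. real (cyc_count n m (fst x)) > N}
        \<le> measure_pmf.prob ?M {x \<in> space (measure_pmf ?M). u x \<ge> N}"
    by (rule measure_pmf.finite_measure_mono) (auto simp: ueq)
  also have "\<dots> \<le> (\<integral>x. u x \<partial>measure_pmf ?M) / N"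
    by (rule integral_Markov_inequality_measure[of _ _ UNIV])
      (use N intI in \<open>auto simp: u_def sum_nonneg\<close>)
  also have "(\<integral>x. u x \<partial>measure_pmf ?M) = (\<Sum>v\<in>{0..<n}. measure_pmf.prob ?M (C v))"
    unfolding u_def by (subst Bochner_Integration.integral_sum) (simp_all add: intI)
  also have "\<dots> \<le> (\<Sum>v\<in>{0..<n}. \<Sum>l\<in>{3..2*m+2}. real l * real n ^ (l - 1) * q ^ l)"
    unfolding C_def by (intro sum_mono prob_cycle_near_vertex_le q)
  also have "\<dots> = real n * (\<Sum>l\<in>{3..2*m+2}. real l * real n ^ (l - 1) * q ^ l)" by simp
  finally show ?thesis using N by (simp add: divide_right_mono)
qed

section \<open>Estimates for \<open>np \<le> C\<close>\<close>

lemma pow_div_fact_le_exp: "real t ^ t / fact t \<le> exp (real t)"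
proof -
  have s: "(\<lambda>n. real t ^ n /\<^sub>R fact n) sums exp (real t)" by (rule exp_converges)
  have "(\<Sum>n\<in>{t}. real t ^ n /\<^sub>R fact n) \<le> (\<Sum>n. real t ^ n /\<^sub>R fact n)"
    by (rule sum_le_suminf) (use s in \<open>auto simp: sums_iff\<close>)
  then show ?thesis using s by (simp add: sums_iff divide_inverse mult.commute)
qed

lemma binomial_star_bound:
  fixes C q :: real and n t :: nat
  assumes C: "1 \<le> C" and t1: "C * exp 2 \<le> real t" and t2: "ln (real n) + (ln (real n))\<^sup>2 \<le> real t"
    and n: "1 \<le> n" and q: "0 \<le> q" "real n * q \<le> C"
  shows "real n * real (n choose t) * q ^ t \<le> exp (- (ln (real n))\<^sup>2)"
proof -
  have tpos: "real t > 0" using t1 C by (smt (verit) exp_gt_zero mult_pos_pos)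
  have "real (n choose t) * fact t \<le> real n ^ t"
    using binomial_fact_pow[of n t] by (metis of_nat_fact of_nat_le_iff of_nat_mult of_nat_power)
  then have "real (n choose t) * q ^ t \<le> real n ^ t / fact t * q ^ t"
    using q by (intro mult_right_mono) (auto simp: field_simps)
  also have "\<dots> = (real n * q) ^ t / fact t" by (simp add: power_mult_distrib)
  also have "\<dots> \<le> C ^ t / fact t"
    using q by (intro divide_right_mono power_mono) auto
  also have "\<dots> = (C / real t) ^ t * (real t ^ t / fact t)"
    using tpos by (simp add: power_divide)
  also have "\<dots> \<le> (C / real t) ^ t * exp (real t)"
    using C tpos by (intro mult_left_mono pow_div_fact_le_exp) auto
  also have "\<dots> = (C * exp 1 / real t) ^ t"
    by (simp add: power_mult_distrib power_divide exp_of_nat_mult[symmetric])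
  also have "\<dots> \<le> exp (-1) ^ t"
  proof (intro power_mono)
    have "C * exp 1 * exp 1 \<le> real t" using t1 by (simp add: mult.assoc exp_add[symmetric])
    then show "C * exp 1 / real t \<le> exp (-1)" using tpos by (simp add: exp_minus field_simps)
  qed (use C tpos in auto)
  also have "\<dots> = exp (- real t)" by (simp add: exp_of_nat_mult[symmetric])
  finally have "real n * real (n choose t) * q ^ t \<le> real n * exp (- real t)"
    using n by (simp add: mult.assoc)
  also have "\<dots> = exp (ln (real n) - real t)" using n by (simp add: exp_diff exp_minus field_simps)
  also have "\<dots> \<le> exp (- (ln (real n))\<^sup>2)" using t2 by simp
  finally show ?thesis .
qed

lemma lollipop_sum_bound:
  fixes C q :: real and n m :: nat
  assumes C: "1 \<le> C" and q: "0 \<le> q" "real n * q \<le> C"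
  shows "real n * (\<Sum>l\<in>{3..2*m+2}. real l * real n ^ (l - 1) * q ^ l) \<le> (2 * real m + 2)^2 * C ^ (2*m+2)"
proof -
  have "real n * (\<Sum>l\<in>{3..2*m+2}. real l * real n ^ (l - 1) * q ^ l)
      = (\<Sum>l\<in>{3..2*m+2}. real l * (real n * q) ^ l)"
    unfolding sum_distrib_left
  proof (intro sum.cong refl)
    fix l :: nat assume "l \<in> {3..2*m+2}"
    then have "real n * real n ^ (l - 1) = real n ^ l" by (metis Suc_pred' le_numeral_extra(3)
      atLeastAtMost_iff not_numeral_le_zero power_Suc zero_less_iff_neq_zero)
    then show "real n * (real l * real n ^ (l - 1) * q ^ l) = real l * (real n * q) ^ l"
      by (simp add: power_mult_distrib algebra_simps)
  qed
  also have "\<dots> \<le> (\<Sum>l\<in>{3..2*m+2}. (2 * real m + 2) * C ^ (2*m+2))"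
  proof (intro sum_mono mult_mono)
    fix l assume l: "l \<in> {3..2*m+2}"
    have "(real n * q) ^ l \<le> C ^ l" using q by (intro power_mono) auto
    also have "\<dots> \<le> C ^ (2*m+2)" using C l by (intro power_increasing) auto
    finally show "(real n * q) ^ l \<le> C ^ (2*m+2)" .
  qed (use q in auto)
  also have "\<dots> \<le> (2 * real m + 2)^2 * C ^ (2*m+2)"
    using C by (simp add: power2_eq_square mult_right_mono)
  finally show ?thesis .
qed

lemma omega_bounds:
  assumes "0 < ln (ln (real n))"
  shows "1 \<le> omega n" "real (omega n) \<le> ln (ln (real n)) + 1"
proof -
  have c1: "0 < \<lceil>ln (ln (real n))\<rceil>" using assms by (simp add: zero_less_ceiling)
  then show "real (omega n) \<le> ln (ln (real n)) + 1"
    unfolding omega_def by (simp add: of_int_ceiling_le_add_one)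
  show "1 \<le> omega n" unfolding omega_def using c1 by (simp add: Suc_le_eq)
qed

lemma prob_cyc_count_gt_two_thirds_le:
  assumes q: "0 \<le> q" "q \<le> 1" "real n * q \<le> C" and C: "1 \<le> C" and n: "1 \<le> n"
    and m: "real (2*m+2) * ln C \<le> ln (real n) / 20"
  shows "measure_pmf.prob (planted_replica n k q) {x. real (cyc_count n m (fst x)) > real n powr (2/3)}
         \<le> (2 * real m + 2)^2 * real n powr (1/20 - 2/3)"
proof -
  have N: "0 < real n powr (2/3)" using n by simp
  have "C ^ (2*m+2) = exp (ln C) ^ (2*m+2)" using C by simp
  also have "\<dots> = exp (real (2*m+2) * ln C)" by (rule exp_of_nat_mult[symmetric])
  also have "\<dots> \<le> real n powr (1/20)" using m n by (simp add: powr_def)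
  finally have Cm: "C ^ (2*m+2) \<le> real n powr (1/20)" .
  have "measure_pmf.prob (planted_replica n k q) {x. real (cyc_count n m (fst x)) > real n powr (2/3)}
      \<le> real n * (\<Sum>l\<in>{3..2*m+2}. real l * real n ^ (l - 1) * q ^ l) / real n powr (2/3)"
    by (rule prob_cyc_count_gt_le[OF q(1,2) N])
  also have "\<dots> \<le> (2 * real m + 2)^2 * C ^ (2*m+2) / real n powr (2/3)"
    by (intro divide_right_mono lollipop_sum_bound[OF C q(1,3)]) (use N in simp)
  also have "\<dots> \<le> (2 * real m + 2)^2 * real n powr (1/20) / real n powr (2/3)"
    using Cm N by (intro divide_right_mono mult_left_mono) auto
  also have "\<dots> = (2 * real m + 2)^2 * real n powr (1/20 - 2/3)"
    by (simp only: powr_diff times_divide_eq_right)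
  finally show ?thesis .
qed

lemma prob_large_ball_le_exp:
  assumes q: "0 \<le> q" "q \<le> 1" "real n * q \<le> C" and C: "1 \<le> C" and n: "1 \<le> n" and w: "1 \<le> w"
    and large: "C * exp 2 + 2 + ln (real n) + (ln (real n))\<^sup>2 \<le> real n powr (0.1 / real w)"
  shows "measure_pmf.prob (planted_replica n k q)
           {x. \<exists>v \<in> {0..<n}. real (card (ball_set (fst x) w v)) > real n powr 0.1}
         \<le> exp (- (ln (real n))\<^sup>2)"
proof -
  define y where "y = real n powr (0.1 / real w)"
  define t where "t = nat \<lfloor>y\<rfloor>"
  have y: "0 < y" unfolding y_def using n by simp
  have ty: "real t \<le> y" "y - 1 < real t" unfolding t_def using y by (simp_all add: of_nat_nat)
  have "0 \<le> ln (real n)" "0 \<le> C * exp 2" "0 \<le> (ln (real n))\<^sup>2" using n C by simp_all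
  then have t: "1 \<le> real t" "C * exp 2 \<le> real t" "ln (real n) + (ln (real n))\<^sup>2 \<le> real t"
    using large ty unfolding y_def by linarith+
  have "real t ^ w \<le> y ^ w" using ty t by (intro power_mono) auto
  also have "y ^ w = y powr real w" using y by (simp add: powr_realpow)
  also have "\<dots> = real n powr 0.1" unfolding y_def powr_powr using w by simp
  finally have "measure_pmf.prob (planted_replica n k q)
           {x. \<exists>v \<in> {0..<n}. real (card (ball_set (fst x) w v)) > real n powr 0.1}
         \<le> real n * real (n choose t) * q ^ t"
    using t(1) by (intro prob_large_ball_le q(1,2)) auto
  also have "\<dots> \<le> exp (- (ln (real n))\<^sup>2)"
    by (rule binomial_star_bound[OF C t(2,3) n q(1,3)])
  finally show ?thesis .
qed

lemma prob_cyc_count_omega_small_o: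
  fixes p :: "nat \<Rightarrow> real"
  assumes p: "\<And>n. 0 \<le> p n \<and> p n \<le> 1" and C: "1 \<le> C"
    and np: "\<forall>\<^sub>F n in at_top. real n * p n \<le> C"
  shows "(\<lambda>n. measure_pmf.prob (planted_replica n k (p n))
            {x. real (cyc_count n (omega n) (fst x)) > real n powr (2/3)})
           \<in> o(\<lambda>n. real n powr (-1/2))"
proof -
  define g where "g n = (2 * ln (ln (real n)) + 4)^2 * real n powr (1/20 - 2/3)" for n :: nat
  have g: "g \<in> o(\<lambda>n. real n powr (-1/2))" unfolding g_def by real_asymp
  have lnC: "0 \<le> ln C" using C by simp
  have "((\<lambda>n::nat. (2 * ln (ln (real n)) + 4) / ln (real n)) \<longlongrightarrow> 0) at_top" by real_asymp
  then have small: "\<forall>\<^sub>F n in at_top. (2 * ln (ln (real n)) + 4) / ln (real n) < 1 / (20 * (ln C + 1))"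
    using lnC by (intro order_tendstoD) (auto intro!: divide_pos_pos)
  have lnln: "\<forall>\<^sub>F n in at_top. 0 < ln (ln (real n))"
    and lnpos: "\<forall>\<^sub>F n in at_top. 0 < ln (real n)" by real_asymp+
  from np small lnln lnpos eventually_ge_at_top[of "1::nat"] have
    "\<forall>\<^sub>F n in at_top. norm (measure_pmf.prob (planted_replica n k (p n))
       {x. real (cyc_count n (omega n) (fst x)) > real n powr (2/3)}) \<le> 1 * norm (g n)"
  proof eventually_elim
    case (elim n)
    define L where "L = ln (ln (real n))"
    have w: "2 * real (omega n) + 2 \<le> 2 * L + 4" using omega_bounds[OF elim(3)] unfolding L_def by simp
    have "2 * L + 4 < 1 / (20 * (ln C + 1)) * ln (real n)"
      using elim(2,4) unfolding L_def by (simp add: divide_less_eq)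
    then have "(2 * L + 4) * (20 * (ln C + 1)) < ln (real n)"
      using lnC by (simp add: less_divide_eq)
    moreover have "real (2 * omega n + 2) * ln C \<le> (2 * L + 4) * (ln C + 1)"
      using w lnC by (intro mult_mono) auto
    ultimately have "real (2 * omega n + 2) * ln C \<le> ln (real n) / 20"
      by (simp add: algebra_simps)
    then have "measure_pmf.prob (planted_replica n k (p n))
        {x. real (cyc_count n (omega n) (fst x)) > real n powr (2/3)}
      \<le> (2 * real (omega n) + 2)^2 * real n powr (1/20 - 2/3)"
      using p elim(1,5) C by (intro prob_cyc_count_gt_two_thirds_le) auto
    also have "\<dots> \<le> g n"
      unfolding g_def L_def[symmetric] using w by (intro mult_right_mono power_mono) auto
    finally show ?case by (simp add: g_def)
  qed
  then have "(\<lambda>n. measure_pmf.prob (planted_replica n k (p n))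
            {x. real (cyc_count n (omega n) (fst x)) > real n powr (2/3)}) \<in> O(g)"
    by (intro landau_o.bigI[of 1]) auto
  then show ?thesis using g by (rule landau_o.big_small_trans)
qed

lemma prob_large_ball_omega_le:
  fixes p :: "nat \<Rightarrow> real"
  assumes p: "\<And>n. 0 \<le> p n \<and> p n \<le> 1" and C: "1 \<le> C"
    and np: "\<forall>\<^sub>F n in at_top. real n * p n \<le> C"
  shows "\<forall>\<^sub>F n in at_top.
           measure_pmf.prob (planted_replica n k (p n))
             {x. \<exists>v \<in> {0..<n}. real (card (ball_set (fst x) (omega n) v)) > real n powr 0.1}
           \<le> exp (- (ln (real n))\<^sup>2)"
proof -
  have "filterlim (\<lambda>n::nat. real n powr (0.1 / (ln (ln (real n)) + 1)) - 2 - ln (real n)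
      - (ln (real n))^2) at_top at_top"
    by real_asymp
  then have large: "\<forall>\<^sub>F n in at_top. C * exp 2 \<le> real n powr (0.1 / (ln (ln (real n)) + 1))
      - 2 - ln (real n) - (ln (real n))^2"
    unfolding filterlim_at_top by blast
  have lnln: "\<forall>\<^sub>F n in at_top. 0 < ln (ln (real n))" by real_asymp
  from np large lnln eventually_ge_at_top[of "1::nat"] show ?thesis
  proof eventually_elim
    case (elim n)
    have w: "1 \<le> omega n" "real (omega n) \<le> ln (ln (real n)) + 1"
      using omega_bounds[OF elim(3)] by auto
    have "real n powr (0.1 / (ln (ln (real n)) + 1)) \<le> real n powr (0.1 / real (omega n))"
      using w elim(3,4) by (intro powr_mono divide_left_mono) auto
    then show ?case
      using p elim(1,2,4) w(1) C by (intro prob_large_ball_le_exp) auto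
  qed
qed

theorem lemma4p3:
  fixes k :: nat and p :: "nat \<Rightarrow> real"
  assumes "k \<ge> 3"
    and "\<And>n. 0 \<le> p n \<and> p n \<le> 1"
    and "p \<in> O(\<lambda>n. 1 / real n)"
  shows "((\<lambda>n. measure_pmf.prob (planted_replica n k (p n))
            {x. real (cyc_count n (omega n) (fst x)) > real n powr (2/3)})
           \<in> o(\<lambda>n. real n powr (-1/2))) \<and>
         (\<exists>c>0. \<forall>\<^sub>F n in at_top.
           measure_pmf.prob (planted_replica n k (p n))
             {x. \<exists>v \<in> {0..<n}. real (card (ball_set (fst x) (omega n) v)) > real n powr 0.1}
           \<le> exp (- c * (ln (real n))\<^sup>2))"
proof -
  \<comment> \<open>The colourings only restrict which pairs can become edges.\<close>
  obtain c0 where c0: "\<forall>\<^sub>F n in at_top. norm (p n) \<le> c0 * norm (1 / real n)"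
    using assms(3) by (rule landau_o.bigE)
  define C where "C = max c0 1"
  have C: "1 \<le> C" unfolding C_def by simp
  have np: "\<forall>\<^sub>F n in at_top. real n * p n \<le> C"
    using c0 eventually_gt_at_top[of "0::nat"]
    by eventually_elim (use assms(2) in \<open>auto simp: C_def field_simps max_def split: if_splits\<close>)
  show ?thesis
    using prob_cyc_count_omega_small_o[OF assms(2) C np]
      prob_large_ball_omega_le[OF assms(2) C np] by (intro conjI exI[of _ 1]) simp_all
qed

end
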